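(* Let $f\in C^{1,1}_L(\mathbb{R}^n)$, let $\mathcal{Y}=\{y_1,\dots,y_{n+1}\}\subset\mathbb{R}^n$ be affinely independent, let $m$ be the affine function interpolating $f$ on $\mathcal{Y}$, and let $y_0\in\mathbb{R}^n$ with barycentric coordinates $\ell_1,\dots,\ell_{n+1}$ and $\ell_0=-1$. Then for every $u\in\mathbb{R}^n$, $$|m(y_0)-f(y_0)|\le \frac{L}{2}\sum_{i=0}^{n+1}|\ell_i|\,\|y_i-u\|^2 .$$
   Context: Let $n\ge1$ and $L>0$. $C^{1,1}_L(\mathbb{R}^n)$ denotes the set of differentiable functions $f:\mathbb{R}^n\to\mathbb{R}$ with $\|\nabla f(u_1)-\nabla f(u_2)\|\le L\|u_1-u_2\|$ for all $u_1,u_2\in\mathbb{R}^n$ (Euclidean norm). For an affinely independent set $\mathcal{Y}=\{y_1,\dots,y_{n+1}\}\subset\mathbb{R}^n$, the interpolating affine function $m$ is the unique affine $m:\mathbb{R}^n\to\mathbb{R}$ with $m(y_i)=f(y_i)$ for $i=1,\dots,n+1$. The barycentric coordinates of $y_0\in\mathbb{R}^n$ with respect to $\mathcal{Y}$ are the unique reals $\ell_1,\dots,\ell_{n+1}$ with $\sum_{i=1}^{n+1}\ell_i=1$ and $\sum_{i=1}^{n+1}\ell_iy_i=y_0$; one sets $\ell_0=-1$, so that $\sum_{i=0}^{n+1}\ell_i=0$, $\sum_{i=0}^{n+1}\ell_iy_i=0$, and $m(y_0)=\sum_{i=1}^{n+1}\ell_if(y_i)$. *)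

theory Defs
  imports "HOL-Analysis.Analysis"
begin

definition grad :: "(real^'n \<Rightarrow> real) \<Rightarrow> real^'n \<Rightarrow> real^'n" where
  "grad f x = (SOME g. (f has_derivative (\<lambda>h. g \<bullet> h)) (at x))"

definition C11 :: "real \<Rightarrow> (real^'n \<Rightarrow> real) \<Rightarrow> bool" where
  "C11 L f \<longleftrightarrow> (\<forall>x. f differentiable (at x)) \<and>
     (\<forall>u1 u2. norm (grad f u1 - grad f u2) \<le> L * norm (u1 - u2))"

definition affine_fun :: "(real^'n \<Rightarrow> real) \<Rightarrow> bool" where
  "affine_fun m \<longleftrightarrow> (\<exists>a c. \<forall>x. m x = a \<bullet> x + c)"

end

theory Submission
  imports Defs
begin

text \<open>The first-order Taylor polynomial p of f at u is affine, so barycentric combinations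
  reproduce it exactly: p(y0) = \<Sum> l_i p(y_i), while m(y0) = \<Sum> l_i f(y_i). With l_0 = -1 this
  gives m(y0) - f(y0) = \<Sum>_{i=0..n+1} l_i (f - p)(y_i), and an L-Lipschitz gradient bounds every
  Taylor remainder \<bar>(f - p)(y_i)\<bar> by L/2 \<parallel>y_i - u\<parallel>^2.\<close>

lemma has_derivative_grad:
  fixes f :: "real^'n \<Rightarrow> real"
  assumes "f differentiable (at x)"
  shows "(f has_derivative (\<lambda>h. grad f x \<bullet> h)) (at x)"
proof -
  obtain D where D: "(f has_derivative D) (at x)"
    using assms differentiable_def by blast
  then have "D = (\<lambda>h. adjoint D 1 \<bullet> h)"
    using adjoint_clauses(2)[OF has_derivative_linear, of f D] by auto
  with D have "\<exists>g. (f has_derivative (\<lambda>h. g \<bullet> h)) (at x)" by metis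
  then show ?thesis unfolding grad_def by (rule someI_ex)
qed

lemma lipschitz_gradient_taylor_bound:
  fixes f :: "'a::real_inner \<Rightarrow> real" and g :: "'a \<Rightarrow> 'a"
  assumes deriv: "\<And>x. (f has_derivative (\<lambda>h. g x \<bullet> h)) (at x)"
    and lip: "\<And>x z. norm (g x - g z) \<le> L * norm (x - z)"
  shows "\<bar>f y - f u - g u \<bullet> (y - u)\<bar> \<le> L / 2 * (norm (y - u))\<^sup>2"
proof -
  define d where "d = y - u"
  define \<phi> where "\<phi> t = f (u + t *\<^sub>R d) - t * (g u \<bullet> d)" for t
  have \<phi>_deriv: "(\<phi> has_real_derivative ((g (u + t *\<^sub>R d) - g u) \<bullet> d)) (at t)" for t
  proof -
    have "((\<lambda>t. u + t *\<^sub>R d) has_derivative (\<lambda>s. s *\<^sub>R d)) (at t)"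
      by (auto intro!: derivative_eq_intros)
    from has_derivative_compose[OF this deriv]
    have "((\<lambda>t. f (u + t *\<^sub>R d)) has_real_derivative (g (u + t *\<^sub>R d) \<bullet> d)) (at t)"
      by (simp add: o_def has_field_derivative_def inner_scaleR_right mult_commute_abs)
    then show ?thesis
      unfolding \<phi>_def by (auto intro!: derivative_eq_intros simp: inner_diff_left)
  qed
  have \<phi>'_bound: "\<bar>(g (u + t *\<^sub>R d) - g u) \<bullet> d\<bar> \<le> L * t * (norm d)\<^sup>2" if "0 \<le> t" for t
  proof -
    have "\<bar>(g (u + t *\<^sub>R d) - g u) \<bullet> d\<bar> \<le> norm (g (u + t *\<^sub>R d) - g u) * norm d"
      by (rule Cauchy_Schwarz_ineq2)
    also have "\<dots> \<le> L * norm (t *\<^sub>R d) * norm d"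
      using lip[of "u + t *\<^sub>R d" u] by (simp add: mult_right_mono)
    finally show ?thesis using that by (simp add: power2_eq_square)
  qed
  have "norm (\<phi> 1 - \<phi> 0) \<le> L / 2 * 1\<^sup>2 * (norm d)\<^sup>2 - L / 2 * 0\<^sup>2 * (norm d)\<^sup>2"
  proof (rule differentiable_bound_general[where f' = "\<lambda>t. (g (u + t *\<^sub>R d) - g u) \<bullet> d"
        and \<phi>' = "\<lambda>t. L * t * (norm d)\<^sup>2"])
    show "continuous_on {0..1} \<phi>"
      using \<phi>_deriv by (meson DERIV_continuous continuous_at_imp_continuous_on)
  qed (use \<phi>_deriv \<phi>'_bound in \<open>auto intro!: derivative_eq_intros continuous_intros
          simp: has_real_derivative_iff_has_vector_derivative[symmetric]\<close>)
  then show ?thesis unfolding \<phi>_def d_def by (simp add: algebra_simps)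
qed

lemma C11_taylor_bound:
  fixes f :: "real^'n \<Rightarrow> real"
  assumes "C11 L f"
  shows "\<bar>f y - f u - grad f u \<bullet> (y - u)\<bar> \<le> L / 2 * (norm (y - u))\<^sup>2"
  using assms has_derivative_grad lipschitz_gradient_taylor_bound[of f "grad f" L]
  unfolding C11_def by blast

lemma affine_fun_barycentric:
  fixes p :: "real^'n \<Rightarrow> real"
  assumes "affine_fun p" "sum l I = 1" "(\<Sum>i\<in>I. l i *\<^sub>R y i) = y0"
  shows "(\<Sum>i\<in>I. l i * p (y i)) = p y0"
proof -
  obtain a c where p: "\<And>x. p x = a \<bullet> x + c"
    using assms(1) unfolding affine_fun_def by blast
  have "(\<Sum>i\<in>I. l i * p (y i)) = a \<bullet> (\<Sum>i\<in>I. l i *\<^sub>R y i) + c * sum l I"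
    by (simp add: p inner_sum_right sum_distrib_left sum_distrib_right
        distrib_left sum.distrib mult.commute)
  then show ?thesis using assms(2,3) p by simp
qed

lemma affine_interpolation_error_le:
  fixes f m p :: "real^'n \<Rightarrow> real"
  assumes "affine_fun m" "affine_fun p"
    and "\<And>i. i \<in> I \<Longrightarrow> m (y i) = f (y i)"
    and "sum l I = 1" "(\<Sum>i\<in>I. l i *\<^sub>R y i) = y0"
  shows "\<bar>m y0 - f y0\<bar> \<le> \<bar>f y0 - p y0\<bar> + (\<Sum>i\<in>I. \<bar>l i\<bar> * \<bar>f (y i) - p (y i)\<bar>)"
proof -
  have "m y0 = (\<Sum>i\<in>I. l i * f (y i))"
    using affine_fun_barycentric[OF assms(1,4,5)] assms(3) by simp
  moreover have "p y0 = (\<Sum>i\<in>I. l i * p (y i))"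
    using affine_fun_barycentric[OF assms(2,4,5)] by simp
  ultimately have "m y0 - f y0 = (\<Sum>i\<in>I. l i * (f (y i) - p (y i))) - (f y0 - p y0)"
    by (simp add: right_diff_distrib sum_subtractf)
  also have "\<bar>\<dots>\<bar> \<le> \<bar>f y0 - p y0\<bar> + (\<Sum>i\<in>I. \<bar>l i * (f (y i) - p (y i))\<bar>)"
    using sum_abs[of "\<lambda>i. l i * (f (y i) - p (y i))" I] by linarith
  finally show ?thesis by (simp add: abs_mult)
qed

text \<open>Affine independence of the nodes only guarantees that \<open>m\<close> and the \<open>\<ell>\<^sub>i\<close> exist and are
  unique; the estimate itself uses just the interpolation conditions and the two barycentric
  identities.\<close>

theorem theorem3p1:
  fixes f m :: "real^'n \<Rightarrow> real" and L :: real
    and y :: "nat \<Rightarrow> real^'n" and y0 u :: "real^'n" and l :: "nat \<Rightarrow> real"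
  assumes "L > 0"
    and "C11 L f"
    and "inj_on y {1..CARD('n)+1}"
    and "\<not> affine_dependent (y ` {1..CARD('n)+1})"
    and "affine_fun m"
    and "\<And>i. i \<in> {1..CARD('n)+1} \<Longrightarrow> m (y i) = f (y i)"
    and "(\<Sum>i=1..CARD('n)+1. l i) = 1"
    and "(\<Sum>i=1..CARD('n)+1. l i *\<^sub>R y i) = y0"
  shows "\<bar>m y0 - f y0\<bar> \<le> L / 2 * (\<bar>-1\<bar> * (norm (y0 - u))\<^sup>2
            + (\<Sum>i=1..CARD('n)+1. \<bar>l i\<bar> * (norm (y i - u))\<^sup>2))"
proof -
  define p where "p x = f u + grad f u \<bullet> (x - u)" for x
  have "affine_fun p"
    unfolding affine_fun_def p_def
    by (intro exI[of _ "grad f u"] exI[of _ "f u - grad f u \<bullet> u"]) (simp add: inner_diff_right)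
  have remainder: "\<bar>f x - p x\<bar> \<le> L / 2 * (norm (x - u))\<^sup>2" for x
    using C11_taylor_bound[OF assms(2)] unfolding p_def by (simp add: diff_diff_add)
  have "\<bar>m y0 - f y0\<bar> \<le> \<bar>f y0 - p y0\<bar>
      + (\<Sum>i=1..CARD('n)+1. \<bar>l i\<bar> * \<bar>f (y i) - p (y i)\<bar>)"
    using affine_interpolation_error_le[OF assms(5) \<open>affine_fun p\<close> assms(6-8)] .
  also have "\<dots> \<le> L / 2 * (norm (y0 - u))\<^sup>2
      + (\<Sum>i=1..CARD('n)+1. \<bar>l i\<bar> * (L / 2 * (norm (y i - u))\<^sup>2))"
    by (intro add_mono remainder sum_mono mult_left_mono) auto
  finally show ?thesis
    by (simp add: sum_distrib_left distrib_left mult.left_commute)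
qed

end
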